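(* Let $\Delta$ be a group and let $A, B$ be subgroups of $\Delta$ with $c(A,B) < \infty$. Then $\mathbf{C}_n(A, \Delta) \simeq \mathbf{C}_n(B, \Delta)$.
   Context: For subgroups $\Delta_1,\Delta_2$ of a group, $c(\Delta_1,\Delta_2) = [\Delta_1:\Delta_1\cap\Delta_2][\Delta_2:\Delta_1\cap\Delta_2]$. For $\Gamma \leq H$, $\mathbf{c}_k(\Gamma,H) \in \mathbb{N}\cup\{\infty\}$ is the cardinality of $\{\Delta \leq H : c(\Gamma,\Delta) = k\}$ and $\mathbf{C}_n(\Gamma,H) = \sum_{k=1}^n \mathbf{c}_k(\Gamma,H)$. For $f,g:\mathbb{N}\to\mathbb{N}\cup\{\infty\}$, $f \preceq g$ means there exists $C>0$ with $f(n) \leq C g(Cn)$ for all $n$; $f \simeq g$ means $f \preceq g$ and $g \preceq f$. *)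

theory Defs
  imports "HOL-Algebra.Coset" "HOL-Library.Extended_Nat"
begin

definition ecard :: "'a set \<Rightarrow> enat" where
  "ecard S = (if finite S then enat (card S) else \<infinity>)"

definition sub_index :: "('a, 'b) monoid_scheme \<Rightarrow> 'a set \<Rightarrow> 'a set \<Rightarrow> enat" where
  "sub_index G H K = ecard {K #>\<^bsub>G\<^esub> h | h. h \<in> H}"

definition commens :: "('a, 'b) monoid_scheme \<Rightarrow> 'a set \<Rightarrow> 'a set \<Rightarrow> enat" where
  "commens G D1 D2 = sub_index G D1 (D1 \<inter> D2) * sub_index G D2 (D1 \<inter> D2)"

definition cnt_k :: "('a, 'b) monoid_scheme \<Rightarrow> 'a set \<Rightarrow> nat \<Rightarrow> enat" where
  "cnt_k G \<Gamma> k = ecard {D. subgroup D G \<and> commens G \<Gamma> D = enat k}"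

definition cnt_C :: "('a, 'b) monoid_scheme \<Rightarrow> 'a set \<Rightarrow> nat \<Rightarrow> enat" where
  "cnt_C G \<Gamma> n = (\<Sum>k\<in>{1..n}. cnt_k G \<Gamma> k)"

definition fpreceq :: "(nat \<Rightarrow> enat) \<Rightarrow> (nat \<Rightarrow> enat) \<Rightarrow> bool" where
  "fpreceq f g \<longleftrightarrow> (\<exists>C::nat. C > 0 \<and> (\<forall>n. f n \<le> enat C * g (C * n)))"

definition fsimeq :: "(nat \<Rightarrow> enat) \<Rightarrow> (nat \<Rightarrow> enat) \<Rightarrow> bool" where
  "fsimeq f g \<longleftrightarrow> fpreceq f g \<and> fpreceq g f"

end

theory Submission
  imports Defs
begin

text \<open>Commensurability is submultiplicative, \<open>c(A,D) \<le> c(A,B) c(B,D)\<close>, because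
  \<open>[A : A \<inter> D] \<le> [A : A \<inter> B] [B : B \<inter> D]\<close>. So if \<open>m = c(B,A)\<close> is finite, every
  subgroup \<open>D\<close> with \<open>c(A,D) \<le> n\<close> satisfies \<open>c(B,D) \<le> m n\<close>, whence
  \<open>C\<^sub>n(A) \<le> C\<^sub>m\<^sub>n(B) \<le> m C\<^sub>m\<^sub>n(B)\<close>; the other comparison is symmetric.\<close>

lemma ecard_image_le: "ecard (f ` S) \<le> ecard S"
  by (cases "finite S") (auto simp: ecard_def card_image_le)

lemma ecard_mono: "S \<subseteq> T \<Longrightarrow> ecard S \<le> ecard T"
  by (auto simp: ecard_def card_mono dest: finite_subset)

lemma ecard_cartesian_product: "ecard (S \<times> T) = ecard S * ecard T"
proof (cases "S = {} \<or> T = {}")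
  case True
  then show ?thesis by (auto simp: ecard_def zero_enat_def)
next
  case False
  then show ?thesis
    by (cases "finite S"; cases "finite T")
      (auto simp: ecard_def card_cartesian_product finite_cartesian_product_iff)
qed

lemma one_le_ecard: "S \<noteq> {} \<Longrightarrow> 1 \<le> ecard S"
  by (auto simp: ecard_def one_enat_def Suc_le_eq card_gt_0_iff)

lemma ecard_Un_disjoint: "X \<inter> Y = {} \<Longrightarrow> ecard (X \<union> Y) = ecard X + ecard Y"
  by (cases "finite X"; cases "finite Y") (auto simp: ecard_def card_Un_disjoint)

lemma ecard_UN_disjoint:
  assumes "finite I" "\<And>i j. i \<in> I \<Longrightarrow> j \<in> I \<Longrightarrow> i \<noteq> j \<Longrightarrow> F i \<inter> F j = {}"
  shows "ecard (\<Union>i\<in>I. F i) = (\<Sum>i\<in>I. ecard (F i))"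
  using assms
proof (induction I rule: finite_induct)
  case empty
  then show ?case by (simp add: ecard_def zero_enat_def)
next
  case (insert x I)
  then have "F x \<inter> (\<Union>i\<in>I. F i) = {}" by blast
  with insert show ?case by (simp add: ecard_Un_disjoint)
qed

lemma ecard_image_le_if_factors:
  assumes "\<forall>x\<in>H. \<forall>y\<in>H. f x = f y \<longrightarrow> g x = g y"
  shows "ecard (g ` H) \<le> ecard (f ` H)"
proof -
  have "g (inv_into H f (f x)) = g x" if "x \<in> H" for x
    using assms that by (meson f_inv_into_f image_eqI inv_into_into)
  then have "g ` H = (\<lambda>v. g (inv_into H f v)) ` f ` H"
    by (simp add: image_image cong: image_cong)
  then show ?thesis by (metis ecard_image_le)
qed

lemma sub_index_eq_ecard_image: "sub_index G H K = ecard ((\<lambda>h. K #>\<^bsub>G\<^esub> h) ` H)"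
  unfolding sub_index_def by (simp add: Setcompr_eq_image)

lemma (in group) rcos_eq_iff:
  assumes "subgroup H G" "x \<in> carrier G" "y \<in> carrier G"
  shows "H #> x = H #> y \<longleftrightarrow> x \<otimes> inv y \<in> H"
proof
  assume "H #> x = H #> y"
  then have "x \<in> H #> y" using rcos_self[OF assms(2,1)] by simp
  then show "x \<otimes> inv y \<in> H" using subgroup.rcos_module_imp[OF assms(1) is_group assms(3)] by blast
next
  assume "x \<otimes> inv y \<in> H"
  then have "x \<in> H #> y" using subgroup.rcos_module_rev[OF assms(1) is_group assms(3,2)] by blast
  then show "H #> x = H #> y" using repr_independence[OF _ assms(3,1)] by simp
qed

lemma (in group) rcos_some_repr:
  assumes "subgroup H G" "x \<in> carrier G"
  shows "(SOME r. r \<in> H #> x) \<in> carrier G" and "x \<otimes> inv (SOME r. r \<in> H #> x) \<in> H"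
proof -
  have r: "(SOME r. r \<in> H #> x) \<in> H #> x"
    using rcos_self[OF assms(2,1)] by (rule someI)
  then show rc: "(SOME r. r \<in> H #> x) \<in> carrier G"
    using subgroup.elemrcos_carrier[OF assms(1) is_group assms(2)] by blast
  have "H #> x = H #> (SOME r. r \<in> H #> x)"
    using repr_independence[OF r assms(2,1)] .
  then show "x \<otimes> inv (SOME r. r \<in> H #> x) \<in> H"
    using rcos_eq_iff[OF assms rc] by simp
qed

lemma (in group) sub_index_Int_le:
  assumes sA: "subgroup A G" and sB: "subgroup B G" and sD: "subgroup D G"
  shows "sub_index G A (A \<inter> D) \<le> sub_index G A (A \<inter> B) * sub_index G B (B \<inter> D)"
proof -
  have sAB: "subgroup (A \<inter> B) G" and sBD: "subgroup (B \<inter> D) G" and sAD: "subgroup (A \<inter> D) G"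
    using subgroups_Inter_pair assms by blast+
  have carrA: "a \<in> carrier G" if "a \<in> A" for a using subgroup.mem_carrier[OF sA that] .
  define r where "r a = (SOME r. r \<in> (A \<inter> B) #> a)" for a
  have r: "r a \<in> carrier G" "a \<otimes> inv (r a) \<in> A \<inter> B" if "a \<in> A" for a
    unfolding r_def using rcos_some_repr[OF sAB carrA[OF that]] by auto
  text \<open>Since \<open>r a\<close> depends only on the coset \<open>(A \<inter> B) a\<close>, equal values of \<open>f\<close> at
    \<open>a, a'\<close> give \<open>a a'\<^sup>-\<^sup>1 = (a (r a)\<^sup>-\<^sup>1) (a' (r a)\<^sup>-\<^sup>1)\<^sup>-\<^sup>1 \<in> B \<inter> D\<close>.\<close>
  define f where "f a = ((A \<inter> B) #> a, (B \<inter> D) #> (a \<otimes> inv (r a)))" for a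
  have f_range: "f ` A \<subseteq> ((\<lambda>a. (A \<inter> B) #> a) ` A) \<times> ((\<lambda>b. (B \<inter> D) #> b) ` B)"
    using r unfolding f_def by auto
  have f_determines_coset: "\<forall>x\<in>A. \<forall>y\<in>A. f x = f y \<longrightarrow> (A \<inter> D) #> x = (A \<inter> D) #> y"
  proof (intro ballI impI)
    fix x y assume x: "x \<in> A" and y: "y \<in> A" and fxy: "f x = f y"
    then have "r x = r y" unfolding f_def r_def by simp
    with fxy have "(B \<inter> D) #> (x \<otimes> inv (r x)) = (B \<inter> D) #> (y \<otimes> inv (r x))"
      unfolding f_def by simp
    then have "(x \<otimes> inv (r x)) \<otimes> inv (y \<otimes> inv (r x)) \<in> B \<inter> D"
      using rcos_eq_iff[OF sBD] r(1)[OF x] carrA[OF x] carrA[OF y] by simp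
    moreover have "(x \<otimes> inv (r x)) \<otimes> inv (y \<otimes> inv (r x)) = x \<otimes> inv y"
      using r(1)[OF x] carrA[OF x] carrA[OF y]
      by (simp add: inv_mult_group m_assoc, simp add: m_assoc[symmetric])
    moreover have "x \<otimes> inv y \<in> A"
      using x y sA by (simp add: subgroup.m_closed subgroup.m_inv_closed)
    ultimately have "x \<otimes> inv y \<in> A \<inter> D" by simp
    then show "(A \<inter> D) #> x = (A \<inter> D) #> y"
      using rcos_eq_iff[OF sAD carrA[OF x] carrA[OF y]] by simp
  qed
  have "sub_index G A (A \<inter> D) \<le> ecard (f ` A)"
    unfolding sub_index_eq_ecard_image by (rule ecard_image_le_if_factors[OF f_determines_coset])
  also have "\<dots> \<le> sub_index G A (A \<inter> B) * sub_index G B (B \<inter> D)"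
    unfolding sub_index_eq_ecard_image ecard_cartesian_product[symmetric]
    by (rule ecard_mono[OF f_range])
  finally show ?thesis .
qed

lemma commens_sym: "commens G A B = commens G B A"
  unfolding commens_def by (simp add: Int_commute mult.commute)

lemma (in group) commens_le_mult:
  assumes sA: "subgroup A G" and sB: "subgroup B G" and sD: "subgroup D G"
  shows "commens G A D \<le> commens G A B * commens G B D"
proof -
  have "commens G A D \<le> (sub_index G A (A \<inter> B) * sub_index G B (B \<inter> D)) *
      (sub_index G D (B \<inter> D) * sub_index G B (A \<inter> B))"
    unfolding commens_def
    using sub_index_Int_le[OF sA sB sD] sub_index_Int_le[OF sD sB sA]
    by (intro mult_mono) (auto simp: Int_commute)
  also have "\<dots> = commens G A B * commens G B D"
    unfolding commens_def by (simp add: ac_simps)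
  finally show ?thesis .
qed

lemma one_le_sub_index: "subgroup H G \<Longrightarrow> 1 \<le> sub_index G H K"
  unfolding sub_index_def by (intro one_le_ecard) (blast dest: subgroup.one_closed)

lemma one_le_commens:
  assumes "subgroup A G" "subgroup D G"
  shows "1 \<le> commens G A D"
proof -
  have "(1::enat) * 1 \<le> commens G A D"
    unfolding commens_def using assms by (intro mult_mono one_le_sub_index) auto
  then show ?thesis by simp
qed

lemma cnt_C_eq_ecard:
  "cnt_C G A n = ecard {D. subgroup D G \<and> (\<exists>k\<in>{1..n}. commens G A D = enat k)}"
proof -
  have "cnt_C G A n = ecard (\<Union>k\<in>{1..n}. {D. subgroup D G \<and> commens G A D = enat k})"
    unfolding cnt_C_def cnt_k_def by (rule ecard_UN_disjoint[symmetric]) auto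
  also have "\<dots> = ecard {D. subgroup D G \<and> (\<exists>k\<in>{1..n}. commens G A D = enat k)}"
    by (rule arg_cong[where f = ecard]) blast
  finally show ?thesis .
qed

lemma (in group) cnt_C_le_cnt_C_mult:
  assumes sA: "subgroup A G" and sB: "subgroup B G" and m: "commens G B A = enat m"
  shows "cnt_C G A n \<le> cnt_C G B (m * n)"
  unfolding cnt_C_eq_ecard
proof (rule ecard_mono, intro subsetI, elim CollectE conjE bexE)
  fix D k assume sD: "subgroup D G" and k: "k \<in> {1..n}" and c: "commens G A D = enat k"
  have "commens G B D \<le> enat (m * k)"
    using commens_le_mult[OF sB sA sD] m c by simp
  then obtain j where j: "commens G B D = enat j" "j \<le> m * k"
    by (metis enat_ile enat_ord_simps(1))
  moreover have "1 \<le> j" using one_le_commens[OF sB sD] j by (simp add: one_enat_def)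
  moreover have "m * k \<le> m * n" using k by simp
  ultimately show "D \<in> {D. subgroup D G \<and> (\<exists>k\<in>{1..m * n}. commens G B D = enat k)}"
    using sD by (auto intro: le_trans)
qed

lemma (in group) fpreceq_cnt_C_if_commens_finite:
  assumes sA: "subgroup A G" and sB: "subgroup B G" and fin: "commens G A B < \<infinity>"
  shows "fpreceq (cnt_C G A) (cnt_C G B)"
proof -
  obtain m where m: "commens G B A = enat m"
    using fin by (cases "commens G B A") (auto simp: commens_sym[of G A B])
  have m_pos: "1 \<le> m" using one_le_commens[OF sB sA] m by (simp add: one_enat_def)
  have "cnt_C G A n \<le> enat m * cnt_C G B (m * n)" for n
  proof -
    have "cnt_C G A n \<le> 1 * cnt_C G B (m * n)"
      using cnt_C_le_cnt_C_mult[OF sA sB m] by simp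
    also have "\<dots> \<le> enat m * cnt_C G B (m * n)"
      by (rule mult_right_mono) (use m_pos in \<open>auto simp: one_enat_def\<close>)
    finally show ?thesis .
  qed
  with m_pos show ?thesis unfolding fpreceq_def by (intro exI[of _ m]) auto
qed

theorem proposition2:
  fixes G :: "('a, 'b) monoid_scheme" and A B :: "'a set"
  assumes "group G" and "subgroup A G" and "subgroup B G"
    and "commens G A B < \<infinity>"
  shows "fsimeq (cnt_C G A) (cnt_C G B)"
proof -
  have "commens G B A < \<infinity>" using assms(4) by (simp add: commens_sym[of G A B])
  then show ?thesis
    unfolding fsimeq_def
    using group.fpreceq_cnt_C_if_commens_finite[OF assms(1,2,3,4)]
      group.fpreceq_cnt_C_if_commens_finite[OF assms(1,3,2)] by blast
qed

end
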